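(* Let $\phi$ be an $n$-cube USO that does not have property L, and let the $2n$-cube USO $\psi$ be a kaleidoscope for $\phi$. Then every $2n$-cube USO $\psi'$ isomorphic to $\psi$ does not have property L.
   Context: For sets $U,V$ let $U\oplus V=(U\cup V)\setminus(U\cap V)$. An $m$-cube orientation on the vertex set of all subsets of $[m]$ has, for each vertex $V$ and $i\in[m]$, exactly one of the directed edges $V\to V\oplus\{i\}$, $V\oplus\{i\}\to V$; it is identified with its outmap $\phi(V)=\{i: V\to V\oplus\{i\}\}$. It is a unique sink orientation (USO) if every face (subgraph induced by an interval $\{X:A\subseteq X\subseteq B\}$) has exactly one sink. For a vertex $V$, the L-graph has vertex set $[m]\setminus V$ and an arc $(i,j)$ for distinct $i,j\notin V$ whenever $j\in\phi(V)\oplus\phi(V\cup\{i\})$; the orientation has property L if all its L-graphs are acyclic. For $V\subseteq[2n]$ write $V_L=V\cap[n]$ and $V_H=\{i-n: i\in V\cap\{n+1,\dots,2n\}\}$. A $2n$-cube USO $\psi$ is a kaleidoscope for the $n$-cube USO $\phi$ if $\psi(V)_L=\phi(V_L\oplus V_H)$ for all $V\subseteq[2n]$. Two $m$-cube USOs $\psi,\psi'$ are isomorphic if there is a bijection $h$ of the set of subsets of $[m]$ such that for all $V,V'$, $V\to V'$ in $\psi$ if and only if $h(V)\to h(V')$ in $\psi'$. *)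

theory Defs
  imports Main
begin

definition sdiff :: "nat set \<Rightarrow> nat set \<Rightarrow> nat set" (infixl "\<oplus>\<^sub>s" 65) where
  "U \<oplus>\<^sub>s V = (U \<union> V) - (U \<inter> V)"

text \<open>An m-cube orientation given by its outmap phi on the subsets of [m] = {1..m}.
  phi V is the set of i with an edge V \<rightarrow> V (+) {i}.\<close>
definition cube_orientation :: "nat \<Rightarrow> (nat set \<Rightarrow> nat set) \<Rightarrow> bool" where
  "cube_orientation m phi \<longleftrightarrow>
     (\<forall>V. V \<subseteq> {1..m} \<longrightarrow> phi V \<subseteq> {1..m}) \<and>
     (\<forall>V i. V \<subseteq> {1..m} \<longrightarrow> i \<in> {1..m} \<longrightarrow> (i \<in> phi V \<longleftrightarrow> i \<notin> phi (V \<oplus>\<^sub>s {i})))"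

definition cube_edge :: "(nat set \<Rightarrow> nat set) \<Rightarrow> nat set \<Rightarrow> nat set \<Rightarrow> bool" where
  "cube_edge phi V V' \<longleftrightarrow> (\<exists>i. i \<in> phi V \<and> V' = V \<oplus>\<^sub>s {i})"

definition face_sink :: "(nat set \<Rightarrow> nat set) \<Rightarrow> nat set \<Rightarrow> nat set \<Rightarrow> nat set \<Rightarrow> bool" where
  "face_sink phi A B X \<longleftrightarrow> A \<subseteq> X \<and> X \<subseteq> B \<and>
     (\<forall>Y. A \<subseteq> Y \<and> Y \<subseteq> B \<longrightarrow> \<not> cube_edge phi X Y)"

definition is_USO :: "nat \<Rightarrow> (nat set \<Rightarrow> nat set) \<Rightarrow> bool" where
  "is_USO m phi \<longleftrightarrow> cube_orientation m phi \<and>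
     (\<forall>A B. A \<subseteq> B \<and> B \<subseteq> {1..m} \<longrightarrow> (\<exists>!X. face_sink phi A B X))"

definition L_graph :: "nat \<Rightarrow> (nat set \<Rightarrow> nat set) \<Rightarrow> nat set \<Rightarrow> (nat \<times> nat) set" where
  "L_graph m phi V = {(i, j). i \<in> {1..m} - V \<and> j \<in> {1..m} - V \<and> i \<noteq> j \<and>
      j \<in> phi V \<oplus>\<^sub>s phi (V \<union> {i})}"

definition property_L :: "nat \<Rightarrow> (nat set \<Rightarrow> nat set) \<Rightarrow> bool" where
  "property_L m phi \<longleftrightarrow> (\<forall>V. V \<subseteq> {1..m} \<longrightarrow> acyclic (L_graph m phi V))"

definition low_part :: "nat \<Rightarrow> nat set \<Rightarrow> nat set" where
  "low_part n V = V \<inter> {1..n}"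

definition high_part :: "nat \<Rightarrow> nat set \<Rightarrow> nat set" where
  "high_part n V = (\<lambda>i. i - n) ` (V \<inter> {n+1..2*n})"

definition kaleidoscope :: "nat \<Rightarrow> (nat set \<Rightarrow> nat set) \<Rightarrow> (nat set \<Rightarrow> nat set) \<Rightarrow> bool" where
  "kaleidoscope n phi psi \<longleftrightarrow> is_USO (2*n) psi \<and>
     (\<forall>V. V \<subseteq> {1..2*n} \<longrightarrow>
        low_part n (psi V) = phi (low_part n V \<oplus>\<^sub>s high_part n V))"

definition USO_isomorphic :: "nat \<Rightarrow> (nat set \<Rightarrow> nat set) \<Rightarrow> (nat set \<Rightarrow> nat set) \<Rightarrow> bool" where
  "USO_isomorphic m psi psi' \<longleftrightarrow>
     (\<exists>h. bij_betw h (Pow {1..m}) (Pow {1..m}) \<and>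
        (\<forall>V\<in>Pow {1..m}. \<forall>V'\<in>Pow {1..m}. cube_edge psi V V' \<longleftrightarrow> cube_edge psi' (h V) (h V')))"

end

theory Submission
  imports Defs
begin

text \<open>A USO isomorphism is an automorphism of the cube graph, and opposite edges of a 4-cycle
  in the cube point in the same direction; hence every isomorphism has the form
  \<open>X \<mapsto> R \<oplus> \<sigma>(X)\<close> for a vertex \<open>R\<close> and a permutation \<open>\<sigma>\<close> of the coordinates. Such a map carries
  an arc \<open>(a, b)\<close> of the L-graph of \<open>\<psi>\<close> at \<open>U\<close> to the arc \<open>(\<sigma> a, \<sigma> b)\<close> of the L-graph of
  \<open>\<psi>'\<close> at \<open>R \<oplus> \<sigma>(U)\<close>, provided \<open>\<sigma> a\<close> and \<open>\<sigma> b\<close> point upwards from there.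
  In a kaleidoscope the low outmap at \<open>U\<close> only depends on \<open>U\<^sub>L \<oplus> U\<^sub>H\<close>, so the low part of \<open>U\<close>
  can be prescribed so that all low directions point upwards at \<open>R \<oplus> \<sigma>(U)\<close>, while the high part
  makes \<open>U\<^sub>L \<oplus> U\<^sub>H\<close> a vertex \<open>V\<close> at which the L-graph of \<open>\<phi>\<close> has a cycle. That cycle is then
  carried to a cycle of the L-graph of \<open>\<psi>'\<close> at \<open>R \<oplus> \<sigma>(U)\<close>.\<close>

lemma sdiff_iff [simp]: "x \<in> A \<oplus>\<^sub>s B \<longleftrightarrow> (x \<in> A) \<noteq> (x \<in> B)"
  unfolding sdiff_def by auto

lemma sdiff_sdiff_cancel [simp]: "A \<oplus>\<^sub>s B \<oplus>\<^sub>s B = A"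
  by auto

lemma sdiff_empty [simp]: "{} \<oplus>\<^sub>s A = A" "A \<oplus>\<^sub>s {} = A"
  by auto

lemma sdiff_assoc: "A \<oplus>\<^sub>s B \<oplus>\<^sub>s C = A \<oplus>\<^sub>s (B \<oplus>\<^sub>s C)"
  by auto

lemma insert_eq_sdiff_singleton: "x \<notin> S \<Longrightarrow> insert x S = S \<oplus>\<^sub>s {x}"
  by auto

lemma sdiff_singleton_subset: "X \<subseteq> S \<Longrightarrow> d \<in> S \<Longrightarrow> X \<oplus>\<^sub>s {d} \<subseteq> S"
  by auto

lemma sdiff_singleton_inj: "A \<oplus>\<^sub>s {a} = A \<oplus>\<^sub>s {b} \<Longrightarrow> a = b"
  by (auto simp: set_eq_iff)

lemma image_sdiff:
  assumes "inj_on f S" "A \<subseteq> S" "B \<subseteq> S"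
  shows "f ` (A \<oplus>\<^sub>s B) = f ` A \<oplus>\<^sub>s f ` B"
proof -
  have "f ` (A \<oplus>\<^sub>s B) = f ` (A \<union> B) - f ` (A \<inter> B)"
    unfolding sdiff_def using assms by (intro inj_on_image_set_diff) auto
  also have "\<dots> = f ` A \<oplus>\<^sub>s f ` B"
    unfolding sdiff_def image_Un inj_on_image_Int[OF assms] ..
  finally show ?thesis .
qed

lemma cube_square_opposite_edges:
  assumes "B = A \<oplus>\<^sub>s {x}" "C = B \<oplus>\<^sub>s {y}" "D = C \<oplus>\<^sub>s {z}" "A = D \<oplus>\<^sub>s {w}"
    and "A \<noteq> C" "B \<noteq> D"
  shows "A \<oplus>\<^sub>s B = D \<oplus>\<^sub>s C"
proof -
  have "x \<noteq> y"
    using assms(1,2,5) by auto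
  moreover have "x \<noteq> w"
    using assms(1,4,6) by auto
  moreover have "A = A \<oplus>\<^sub>s {x} \<oplus>\<^sub>s {y} \<oplus>\<^sub>s {z} \<oplus>\<^sub>s {w}"
    using assms(1-4) by simp
  ultimately have "x = z"
    by (metis insertI1 sdiff_iff singletonD)
  then show ?thesis
    using assms(1,3) by auto
qed

lemma cube_edge_flip_iff: "cube_edge phi V (V \<oplus>\<^sub>s {j}) \<longleftrightarrow> j \<in> phi V"
  unfolding cube_edge_def by (auto dest: sdiff_singleton_inj)

lemma acyclic_by_hom:
  assumes hom: "\<And>a b. (a, b) \<in> r \<Longrightarrow> (f a, f b) \<in> s" and "acyclic s"
  shows "acyclic r"
proof (rule acyclicI, intro allI notI)
  have "(f a, f b) \<in> s\<^sup>+" if "(a, b) \<in> r\<^sup>+" for a b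
    using that by (induction rule: trancl_induct) (auto intro: hom trancl_into_trancl)
  moreover fix x assume "(x, x) \<in> r\<^sup>+"
  ultimately show False
    using \<open>acyclic s\<close> unfolding acyclic_def by blast
qed

locale cube_embedding =
  fixes m :: nat and h :: "nat set \<Rightarrow> nat set"
  assumes maps_to: "X \<subseteq> {1..m} \<Longrightarrow> h X \<subseteq> {1..m}"
    and inj: "inj_on h (Pow {1..m})"
    and adjacent: "X \<subseteq> {1..m} \<Longrightarrow> d \<in> {1..m} \<Longrightarrow> \<exists>c. h (X \<oplus>\<^sub>s {d}) = h X \<oplus>\<^sub>s {c}"
begin

lemma image_neq: "X \<subseteq> {1..m} \<Longrightarrow> Y \<subseteq> {1..m} \<Longrightarrow> X \<noteq> Y \<Longrightarrow> h X \<noteq> h Y"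
  using inj_onD[OF inj] by blast

lemma edge_images_parallel:
  assumes X: "X \<subseteq> {1..m}" and de: "d \<in> {1..m}" "e \<in> {1..m}" "d \<noteq> e"
  shows "h (X \<oplus>\<^sub>s {e}) \<oplus>\<^sub>s h (X \<oplus>\<^sub>s {e} \<oplus>\<^sub>s {d}) = h X \<oplus>\<^sub>s h (X \<oplus>\<^sub>s {d})"
proof -
  have Xd: "X \<oplus>\<^sub>s {d} \<subseteq> {1..m}" and Xe: "X \<oplus>\<^sub>s {e} \<subseteq> {1..m}"
    using X de by (auto intro: sdiff_singleton_subset)
  have swap: "X \<oplus>\<^sub>s {e} \<oplus>\<^sub>s {d} = X \<oplus>\<^sub>s {d} \<oplus>\<^sub>s {e}"
    by auto
  obtain x y z w where
    e1: "h (X \<oplus>\<^sub>s {d}) = h X \<oplus>\<^sub>s {x}" and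
    e2: "h (X \<oplus>\<^sub>s {d} \<oplus>\<^sub>s {e}) = h (X \<oplus>\<^sub>s {d}) \<oplus>\<^sub>s {y}" and
    e3: "h (X \<oplus>\<^sub>s {e} \<oplus>\<^sub>s {d}) = h (X \<oplus>\<^sub>s {e}) \<oplus>\<^sub>s {z}" and
    e4: "h (X \<oplus>\<^sub>s {e} \<oplus>\<^sub>s {e}) = h (X \<oplus>\<^sub>s {e}) \<oplus>\<^sub>s {w}"
    using adjacent[OF X de(1)] adjacent[OF Xd de(2)] adjacent[OF Xe de(1)] adjacent[OF Xe de(2)]
    by blast
  have e3': "h (X \<oplus>\<^sub>s {e}) = h (X \<oplus>\<^sub>s {d} \<oplus>\<^sub>s {e}) \<oplus>\<^sub>s {z}"
    using e3 swap by (metis sdiff_sdiff_cancel)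
  have e4': "h X = h (X \<oplus>\<^sub>s {e}) \<oplus>\<^sub>s {w}"
    using e4 by simp
  have diag1: "h X \<noteq> h (X \<oplus>\<^sub>s {d} \<oplus>\<^sub>s {e})"
    by (rule image_neq) (use X Xd de in \<open>auto intro: sdiff_singleton_subset\<close>)
  have diag2: "h (X \<oplus>\<^sub>s {d}) \<noteq> h (X \<oplus>\<^sub>s {e})"
    by (rule image_neq) (use Xd Xe de in \<open>auto simp: set_eq_iff\<close>)
  have "h X \<oplus>\<^sub>s h (X \<oplus>\<^sub>s {d}) = h (X \<oplus>\<^sub>s {e}) \<oplus>\<^sub>s h (X \<oplus>\<^sub>s {d} \<oplus>\<^sub>s {e})"
    by (rule cube_square_opposite_edges[OF e1 e2 e3' e4' diag1 diag2])
  then show ?thesis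
    using swap by simp
qed

lemma edge_images_independent:
  assumes "X \<subseteq> {1..m}" and d: "d \<in> {1..m}"
  shows "h X \<oplus>\<^sub>s h (X \<oplus>\<^sub>s {d}) = h {} \<oplus>\<^sub>s h {d}"
proof -
  have "finite X"
    using assms(1) finite_subset by blast
  then show ?thesis
    using assms(1)
  proof (induction X rule: finite_subset_induct')
    case empty
    then show ?case by simp
  next
    case (insert e F)
    have insert_eq: "insert e F = F \<oplus>\<^sub>s {e}"
      using insert.hyps(4) by (rule insert_eq_sdiff_singleton)
    show ?case
    proof (cases "e = d")
      case True
      then show ?thesis
        using insert.IH insert_eq by auto
    next
      case False
      then show ?thesis
        using edge_images_parallel[OF insert.hyps(3) d insert.hyps(2)] insert.IH insert_eq by simp
    qed
  qed
qed

definition direction :: "nat \<Rightarrow> nat" where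
  "direction d = the_elem (h {} \<oplus>\<^sub>s h {d})"

lemma image_flip:
  assumes "X \<subseteq> {1..m}" and "d \<in> {1..m}"
  shows "h (X \<oplus>\<^sub>s {d}) = h X \<oplus>\<^sub>s {direction d}"
proof -
  obtain c where "h {d} = h {} \<oplus>\<^sub>s {c}"
    using adjacent[of "{}" d] assms(2) by auto
  then have "h {} \<oplus>\<^sub>s h {d} = {c}"
    by auto
  then have "h X \<oplus>\<^sub>s h (X \<oplus>\<^sub>s {d}) = {direction d}"
    using edge_images_independent[OF assms] unfolding direction_def by simp
  then show ?thesis
    by auto
qed

lemma direction_in:
  assumes "d \<in> {1..m}"
  shows "direction d \<in> {1..m}"
proof -
  have "direction d \<in> h {} \<union> h {d}"
    using image_flip[of "{}" d] assms by auto
  then show ?thesis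
    using maps_to[of "{}"] maps_to[of "{d}"] assms by blast
qed

lemma inj_on_direction: "inj_on direction {1..m}"
proof (rule inj_onI)
  fix d e assume "d \<in> {1..m}" "e \<in> {1..m}" "direction d = direction e"
  then have "h {d} = h {e}"
    using image_flip[of "{}" d] image_flip[of "{}" e] by simp
  moreover have "{d} \<in> Pow {1..m}" "{e} \<in> Pow {1..m}"
    using \<open>d \<in> {1..m}\<close> \<open>e \<in> {1..m}\<close> by auto
  ultimately have "{d} = {e}"
    by (rule inj_onD[OF inj])
  then show "d = e"
    by simp
qed

lemma image_closed_form:
  assumes "X \<subseteq> {1..m}"
  shows "h X = h {} \<oplus>\<^sub>s direction ` X"
proof -
  have "finite X"
    using assms finite_subset by blast
  then show ?thesis
    using assms
  proof (induction X rule: finite_subset_induct')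
    case empty
    then show ?case by simp
  next
    case (insert e F)
    have "direction e \<notin> direction ` F"
      using inj_on_image_mem_iff[OF inj_on_direction] insert.hyps by blast
    then have "direction ` insert e F = direction ` F \<oplus>\<^sub>s {direction e}"
      unfolding image_insert by (rule insert_eq_sdiff_singleton)
    moreover have "insert e F = F \<oplus>\<^sub>s {e}"
      using insert.hyps(4) by (rule insert_eq_sdiff_singleton)
    ultimately show ?case
      using image_flip[OF insert.hyps(3,2)] insert.IH by (simp add: sdiff_assoc)
  qed
qed

end

definition automorphic_image ::
    "nat \<Rightarrow> nat set \<Rightarrow> (nat \<Rightarrow> nat) \<Rightarrow> (nat set \<Rightarrow> nat set) \<Rightarrow> (nat set \<Rightarrow> nat set) \<Rightarrow> bool" where
  "automorphic_image m R \<sigma> psi psi' \<longleftrightarrow>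
     R \<subseteq> {1..m} \<and> inj_on \<sigma> {1..m} \<and> \<sigma> ` {1..m} \<subseteq> {1..m} \<and>
     (\<forall>X \<subseteq> {1..m}. \<forall>j \<in> {1..m}. \<sigma> j \<in> psi' (R \<oplus>\<^sub>s \<sigma> ` X) \<longleftrightarrow> j \<in> psi X)"

lemma USO_isomorphic_automorphic_image:
  assumes ori: "cube_orientation m psi" and "USO_isomorphic m psi psi'"
  obtains R \<sigma> where "automorphic_image m R \<sigma> psi psi'"
proof -
  obtain h where bij: "bij_betw h (Pow {1..m}) (Pow {1..m})" and edge:
    "\<forall>V \<in> Pow {1..m}. \<forall>V' \<in> Pow {1..m}. cube_edge psi V V' \<longleftrightarrow> cube_edge psi' (h V) (h V')"
    using assms(2) unfolding USO_isomorphic_def by blast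
  \<comment> \<open>every cube edge is an arc of \<open>psi\<close>, so \<open>h\<close> maps cube edges to cube edges\<close>
  have "cube_embedding m h"
  proof
    show "h X \<subseteq> {1..m}" if "X \<subseteq> {1..m}" for X
      using bij_betwE[OF bij] that by blast
    show "inj_on h (Pow {1..m})"
      using bij by (rule bij_betw_imp_inj_on)
    fix X d assume X: "X \<subseteq> {1..m}" and d: "d \<in> {1..m}"
    then have Xd: "X \<oplus>\<^sub>s {d} \<subseteq> {1..m}"
      by (rule sdiff_singleton_subset)
    have "d \<in> psi X \<longleftrightarrow> d \<notin> psi (X \<oplus>\<^sub>s {d})"
      using ori X d unfolding cube_orientation_def by blast
    then have "cube_edge psi X (X \<oplus>\<^sub>s {d}) \<or> cube_edge psi (X \<oplus>\<^sub>s {d}) X"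
      using cube_edge_flip_iff[of psi X d] cube_edge_flip_iff[of psi "X \<oplus>\<^sub>s {d}" d] by auto
    then have "cube_edge psi' (h X) (h (X \<oplus>\<^sub>s {d})) \<or> cube_edge psi' (h (X \<oplus>\<^sub>s {d})) (h X)"
      using edge X Xd by blast
    then show "\<exists>c. h (X \<oplus>\<^sub>s {d}) = h X \<oplus>\<^sub>s {c}"
      unfolding cube_edge_def by (metis sdiff_sdiff_cancel)
  qed
  then interpret cube_embedding m h .
  have "automorphic_image m (h {}) direction psi psi'"
    unfolding automorphic_image_def
  proof (intro conjI allI ballI impI)
    show "h {} \<subseteq> {1..m}" and "inj_on direction {1..m}" and "direction ` {1..m} \<subseteq> {1..m}"
      using maps_to inj_on_direction direction_in by auto
    fix X j assume X: "X \<subseteq> {1..m}" and j: "j \<in> {1..m}"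
    have "j \<in> psi X \<longleftrightarrow> cube_edge psi X (X \<oplus>\<^sub>s {j})"
      by (simp add: cube_edge_flip_iff)
    also have "\<dots> \<longleftrightarrow> cube_edge psi' (h X) (h (X \<oplus>\<^sub>s {j}))"
      using edge X j sdiff_singleton_subset[OF X j] by blast
    also have "\<dots> \<longleftrightarrow> direction j \<in> psi' (h X)"
      by (simp add: image_flip[OF X j] cube_edge_flip_iff)
    finally show "direction j \<in> psi' (h {} \<oplus>\<^sub>s direction ` X) \<longleftrightarrow> j \<in> psi X"
      by (simp add: image_closed_form[OF X])
  qed
  then show thesis
    by (rule that)
qed

lemma L_graph_automorphic_image:
  assumes iso: "automorphic_image m R \<sigma> psi psi'"
    and U: "U \<subseteq> {1..m}" and ab: "a \<in> {1..m}" "b \<in> {1..m}" "a \<noteq> b"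
    and up: "\<sigma> a \<notin> R \<oplus>\<^sub>s \<sigma> ` U" "\<sigma> b \<notin> R \<oplus>\<^sub>s \<sigma> ` U"
    and arc: "b \<in> psi U \<oplus>\<^sub>s psi (U \<oplus>\<^sub>s {a})"
  shows "(\<sigma> a, \<sigma> b) \<in> L_graph m psi' (R \<oplus>\<^sub>s \<sigma> ` U)"
proof -
  have inj: "inj_on \<sigma> {1..m}" and maps: "\<sigma> ` {1..m} \<subseteq> {1..m}"
    and transport: "\<And>X j. X \<subseteq> {1..m} \<Longrightarrow> j \<in> {1..m} \<Longrightarrow>
                      \<sigma> j \<in> psi' (R \<oplus>\<^sub>s \<sigma> ` X) \<longleftrightarrow> j \<in> psi X"
    using iso unfolding automorphic_image_def by auto
  define W where "W = R \<oplus>\<^sub>s \<sigma> ` U"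
  have "\<sigma> ` (U \<oplus>\<^sub>s {a}) = \<sigma> ` U \<oplus>\<^sub>s {\<sigma> a}"
    using image_sdiff[OF inj U] ab by simp
  moreover have "W \<union> {\<sigma> a} = W \<oplus>\<^sub>s {\<sigma> a}"
    using up(1) unfolding W_def by auto
  ultimately have "R \<oplus>\<^sub>s \<sigma> ` (U \<oplus>\<^sub>s {a}) = W \<union> {\<sigma> a}"
    unfolding W_def by (simp add: sdiff_assoc)
  then have "\<sigma> b \<in> psi' W \<oplus>\<^sub>s psi' (W \<union> {\<sigma> a})"
    using arc transport[OF U ab(2)] transport[OF sdiff_singleton_subset[OF U ab(1)] ab(2)]
    unfolding W_def by simp
  moreover have "\<sigma> a \<noteq> \<sigma> b"
    using inj_on_eq_iff[OF inj ab(1,2)] ab(3) by simp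
  moreover have "\<sigma> a \<in> {1..m}" "\<sigma> b \<in> {1..m}"
    using ab(1,2) maps by blast+
  ultimately show ?thesis
    using up unfolding L_graph_def W_def by simp
qed

lemma high_part_shift: "W \<inter> {n+1..2*n} = (\<lambda>i. i + n) ` S \<Longrightarrow> high_part n W = S"
  unfolding high_part_def by (simp add: image_image)

lemma kaleidoscope_low_flips:
  assumes kal: "kaleidoscope n phi psi" and V: "V \<subseteq> {1..n}" and L: "L \<subseteq> {1..n}"
  obtains U where "U \<subseteq> {1..2*n}" and "U \<inter> {1..n} = L"
    and "\<And>a b. a \<in> {1..n} - V \<Longrightarrow> b \<in> {1..n} \<Longrightarrow>
           b \<in> psi U \<oplus>\<^sub>s psi (U \<oplus>\<^sub>s {a}) \<longleftrightarrow> b \<in> phi V \<oplus>\<^sub>s phi (V \<union> {a})"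
proof -
  have outmap: "low_part n (psi X) = phi (low_part n X \<oplus>\<^sub>s high_part n X)" if "X \<subseteq> {1..2*n}" for X
    using kal that unfolding kaleidoscope_def by blast
  define S where "S = V \<oplus>\<^sub>s L"
  define U where "U = L \<union> (\<lambda>i. i + n) ` S"
  have "S \<subseteq> {1..n}"
    using V L unfolding S_def sdiff_def by blast
  then have U_high: "U \<inter> {n+1..2*n} = (\<lambda>i. i + n) ` S"
    and U_low: "U \<inter> {1..n} = L" and U_sub: "U \<subseteq> {1..2*n}"
    using L unfolding U_def by auto
  have "low_part n U \<oplus>\<^sub>s high_part n U = V"
    using U_low high_part_shift[OF U_high] unfolding low_part_def S_def by auto
  moreover have "low_part n (U \<oplus>\<^sub>s {a}) \<oplus>\<^sub>s high_part n (U \<oplus>\<^sub>s {a}) = V \<union> {a}"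
    if a: "a \<in> {1..n} - V" for a
  proof -
    have "(U \<oplus>\<^sub>s {a}) \<inter> {n+1..2*n} = U \<inter> {n+1..2*n}"
      using a by auto
    then have "high_part n (U \<oplus>\<^sub>s {a}) = V \<oplus>\<^sub>s L"
      using U_high unfolding S_def by (simp add: high_part_shift)
    moreover have "low_part n (U \<oplus>\<^sub>s {a}) = L \<oplus>\<^sub>s {a}"
      using U_low a unfolding low_part_def by auto
    ultimately show ?thesis
      using a by auto
  qed
  ultimately have "low_part n (psi U) = phi V"
    and "low_part n (psi (U \<oplus>\<^sub>s {a})) = phi (V \<union> {a})" if "a \<in> {1..n} - V" for a
    using that outmap[OF U_sub] outmap[OF sdiff_singleton_subset[OF U_sub]] by auto
  then have "b \<in> psi U \<longleftrightarrow> b \<in> phi V"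
    and "b \<in> psi (U \<oplus>\<^sub>s {a}) \<longleftrightarrow> b \<in> phi (V \<union> {a})"
    if "a \<in> {1..n} - V" "b \<in> {1..n}" for a b
    using that unfolding low_part_def by blast+
  then have "b \<in> psi U \<oplus>\<^sub>s psi (U \<oplus>\<^sub>s {a}) \<longleftrightarrow> b \<in> phi V \<oplus>\<^sub>s phi (V \<union> {a})"
    if "a \<in> {1..n} - V" "b \<in> {1..n}" for a b
    using that by simp
  with U_sub U_low show thesis
    by (rule that)
qed

lemma kaleidoscope_automorphic_image_L_graph:
  assumes kal: "kaleidoscope n phi psi" and iso: "automorphic_image (2*n) R \<sigma> psi psi'"
    and V: "V \<subseteq> {1..n}"
  obtains W where "W \<subseteq> {1..2*n}"
    and "\<And>a b. (a, b) \<in> L_graph n phi V \<Longrightarrow> (\<sigma> a, \<sigma> b) \<in> L_graph (2*n) psi' W"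
proof -
  have R: "R \<subseteq> {1..2*n}" and inj: "inj_on \<sigma> {1..2*n}" and maps: "\<sigma> ` {1..2*n} \<subseteq> {1..2*n}"
    using iso unfolding automorphic_image_def by auto
  obtain U where U: "U \<subseteq> {1..2*n}" "U \<inter> {1..n} = {i \<in> {1..n}. \<sigma> i \<in> R}"
    and flips: "\<And>a b. a \<in> {1..n} - V \<Longrightarrow> b \<in> {1..n} \<Longrightarrow>
                  b \<in> psi U \<oplus>\<^sub>s psi (U \<oplus>\<^sub>s {a}) \<longleftrightarrow> b \<in> phi V \<oplus>\<^sub>s phi (V \<union> {a})"
    using kaleidoscope_low_flips[OF kal V, of "{i \<in> {1..n}. \<sigma> i \<in> R}"] by blast
  have up: "\<sigma> a \<notin> R \<oplus>\<^sub>s \<sigma> ` U" if a: "a \<in> {1..n}" for a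
  proof -
    have "\<sigma> a \<in> \<sigma> ` U \<longleftrightarrow> a \<in> U"
      using inj_on_image_mem_iff[OF inj _ U(1)] a by simp
    moreover have "a \<in> U \<longleftrightarrow> \<sigma> a \<in> R"
      using U(2) a by blast
    ultimately show ?thesis
      by simp
  qed
  have W: "R \<oplus>\<^sub>s \<sigma> ` U \<subseteq> {1..2*n}"
    using R U(1) maps unfolding sdiff_def by blast
  have "(\<sigma> a, \<sigma> b) \<in> L_graph (2*n) psi' (R \<oplus>\<^sub>s \<sigma> ` U)" if "(a, b) \<in> L_graph n phi V" for a b
  proof -
    from that have a: "a \<in> {1..n} - V" and b: "b \<in> {1..n}" and "a \<noteq> b"
      and arc: "b \<in> phi V \<oplus>\<^sub>s phi (V \<union> {a})"
      unfolding L_graph_def by auto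
    moreover from a b have "a \<in> {1..2*n}" "b \<in> {1..2*n}"
      by auto
    moreover have "b \<in> psi U \<oplus>\<^sub>s psi (U \<oplus>\<^sub>s {a})"
      using flips[OF a b] arc by blast
    ultimately show ?thesis
      using L_graph_automorphic_image[OF iso U(1)] up by blast
  qed
  with W show thesis
    by (rule that)
qed

theorem theorem6p6:
  fixes n :: nat and phi psi :: "nat set \<Rightarrow> nat set"
  assumes "is_USO n phi"
    and "\<not> property_L n phi"
    and "kaleidoscope n phi psi"
  shows "\<forall>psi'. is_USO (2*n) psi' \<and> USO_isomorphic (2*n) psi psi' \<longrightarrow> \<not> property_L (2*n) psi'"
proof (intro allI impI notI)
  fix psi' assume iso: "is_USO (2*n) psi' \<and> USO_isomorphic (2*n) psi psi'"
    and L: "property_L (2*n) psi'"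
  have "cube_orientation (2*n) psi"
    using assms(3) unfolding kaleidoscope_def is_USO_def by blast
  then obtain R \<sigma> where image: "automorphic_image (2*n) R \<sigma> psi psi'"
    using iso by (blast elim: USO_isomorphic_automorphic_image)
  obtain V where V: "V \<subseteq> {1..n}" and cyclic: "\<not> acyclic (L_graph n phi V)"
    using assms(2) unfolding property_L_def by blast
  obtain W where W: "W \<subseteq> {1..2*n}"
    and hom: "\<And>a b. (a, b) \<in> L_graph n phi V \<Longrightarrow> (\<sigma> a, \<sigma> b) \<in> L_graph (2*n) psi' W"
    using kaleidoscope_automorphic_image_L_graph[OF assms(3) image V] by metis
  have "acyclic (L_graph (2*n) psi' W)"
    using L W unfolding property_L_def by blast
  with hom have "acyclic (L_graph n phi V)"
    by (rule acyclic_by_hom)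
  with cyclic show False ..
qed

end
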